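(* Let $C=(1,c_2,\dots,c_n)$ be a canonical system whose subsystem $C'=(1,c_2,\dots,c_{n-1})$ is noncanonical, and let $w'$ be the minimum counterexample to $C'$. Then $c_n\le w'$.
   Context: A system is a tuple $C=(c_1,\dots,c_n)$ of integers with $1=c_1<c_2<\dots<c_n$; for $k\le n$, $(c_1,\dots,c_k)$ is a subsystem. For a positive integer $v$, $\mathrm{opt}_C(v)$ is the minimum of $\sum_i x_i$ over $x\in\mathbb{Z}_{\ge0}^n$ with $\sum_i c_ix_i=v$. The greedy representation of $v$ is produced by: for $i=n$ down to $1$, while $c_i\le$ remaining value, take a coin $c_i$. $\mathrm{grd}_C(v)$ is its number of coins. A positive integer $w$ is a counterexample if $\mathrm{opt}_C(w)<\mathrm{grd}_C(w)$; $C$ is canonical if it has none, noncanonical otherwise. *)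

theory Defs
  imports Main
begin

(* A system C = (c_1,...,c_n) is represented as a list cs with cs ! (i-1) = c_i. *)
definition is_system :: "nat list \<Rightarrow> bool" where
  "is_system cs \<longleftrightarrow> cs \<noteq> [] \<and> cs ! 0 = 1 \<and> sorted_wrt (<) cs"

(* representations of v: x :: nat \<Rightarrow> nat, only indices < length cs matter *)
definition opt :: "nat list \<Rightarrow> nat \<Rightarrow> nat" where
  "opt cs v = (LEAST k. \<exists>x :: nat \<Rightarrow> nat.
       (\<Sum>i<length cs. cs ! i * x i) = v \<and> (\<Sum>i<length cs. x i) = k)"

(* greedy over coins given in decreasing order: for coin c, the while loop
   "while c <= remaining, take c" takes exactly (remaining div c) coins *)
fun greedy_desc :: "nat list \<Rightarrow> nat \<Rightarrow> nat" where
  "greedy_desc [] v = 0"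
| "greedy_desc (c # ds) v = v div c + greedy_desc ds (v mod c)"

definition grd :: "nat list \<Rightarrow> nat \<Rightarrow> nat" where
  "grd cs v = greedy_desc (rev cs) v"

definition counterexample :: "nat list \<Rightarrow> nat \<Rightarrow> bool" where
  "counterexample cs w \<longleftrightarrow> w > 0 \<and> opt cs w < grd cs w"

definition canonical :: "nat list \<Rightarrow> bool" where
  "canonical cs \<longleftrightarrow> (\<forall>w. \<not> counterexample cs w)"

end

theory Submission
  imports Defs
begin

(* Below c_n the greedy algorithm for C never uses the new coin, while adding a coin can only
   lower opt; so a counterexample of C' smaller than c_n would be one of C. *)

lemma opt_attained:
  assumes "ds \<noteq> []" "ds ! 0 = 1"
  shows "\<exists>x. (\<Sum>i<length ds. ds ! i * x i) = v \<and> (\<Sum>i<length ds. x i) = opt ds v"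
proof -
  let ?x = "\<lambda>i::nat. if i = 0 then v else 0"
  have "(\<Sum>i<length ds. ds ! i * ?x i) = v"
    using assms by (simp add: if_distrib sum.delta cong: if_cong)
  then have "\<exists>k x. (\<Sum>i<length ds. ds ! i * x i) = v \<and> (\<Sum>i<length ds. x i) = k"
    by (intro exI[of _ "\<Sum>i<length ds. ?x i"] exI[of _ ?x]) simp
  from LeastI_ex[OF this] show ?thesis
    unfolding opt_def by blast
qed

lemma opt_append_le:
  assumes "ds \<noteq> []" "ds ! 0 = 1"
  shows "opt (ds @ [c]) v \<le> opt ds v"
proof -
  obtain x where x: "(\<Sum>i<length ds. ds ! i * x i) = v" "(\<Sum>i<length ds. x i) = opt ds v"
    using opt_attained[OF assms] by blast
  define y where "y = x(length ds := 0)"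
  have "(\<Sum>i<length (ds @ [c]). (ds @ [c]) ! i * y i) = v"
    using x(1) by (simp add: y_def nth_append)
  moreover have "(\<Sum>i<length (ds @ [c]). y i) = opt ds v"
    using x(2) by (simp add: y_def)
  ultimately show ?thesis
    unfolding opt_def[of "ds @ [c]"] by (intro Least_le) blast
qed

lemma grd_append_greater:
  assumes "v < c"
  shows "grd (ds @ [c]) v = grd ds v"
  using assms by (simp add: grd_def)

lemma counterexample_append_greater:
  assumes "ds \<noteq> []" "ds ! 0 = 1" "counterexample ds w" "w < c"
  shows "counterexample (ds @ [c]) w"
  using assms opt_append_le[OF assms(1,2), of c w] grd_append_greater[OF assms(4), of ds]
  unfolding counterexample_def by simp

theorem lemma2:
  fixes cs :: "nat list" and w' :: nat
  assumes "is_system cs"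
    and "length cs \<ge> 2"
    and "canonical cs"
    and "\<not> canonical (butlast cs)"
    and "w' = (LEAST w. counterexample (butlast cs) w)"
  shows "last cs \<le> w'"
proof (rule ccontr)
  assume "\<not> last cs \<le> w'"
  define ds where "ds = butlast cs"
  have cs: "cs = ds @ [last cs]"
    using assms(2) unfolding ds_def by (metis append_butlast_last_id list.size(3) not_numeral_le_zero)
  have "ds \<noteq> []"
    using assms(2) by (subst (asm) cs) auto
  moreover have "ds ! 0 = 1"
    using assms(1) \<open>ds \<noteq> []\<close> cs unfolding is_system_def by (metis nth_append_left length_greater_0_conv)
  moreover have "counterexample ds w'"
    using assms(4,5) unfolding canonical_def ds_def by (metis LeastI_ex)
  ultimately have "counterexample cs w'"
    using \<open>\<not> last cs \<le> w'\<close> cs counterexample_append_greater by (metis not_le)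
  then show False
    using assms(3) unfolding canonical_def by blast
qed

end
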